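(* Let $L>0$, $h_{min}>0$, $\mu_1>0$, $\mu_2>0$, and define $\tilde g(x)=x^2+h_{min}^2$ and $\tilde f(x)=(x^2+h_{min}^2)\big((x-L)^2+h_{min}^2\big)$. Consider $$\max_{x\in[0,L]}\ \min\left\{\frac{\mu_1}{\tilde g(x)},\ \frac{\mu_2\,\tilde g(x)}{\tilde f(x)}\right\}.$$ Let $\nu=\frac{h_{min}^2}{L^2+h_{min}^2}$ and, when $\mu_1\ne\mu_2$, $k=\frac{\mu_1}{\mu_1-\mu_2}$. Then the problem has a unique maximizer $x^*$, given by $$x^*=\begin{cases}0,& \mu_1\le \nu\mu_2,\\ L,& \mu_1\ge \mu_2/\nu,\\ \frac{L}{2},& \mu_1=\mu_2,\\ kL+\sqrt{k^2L^2-kL^2-h_{min}^2},& \nu\mu_2<\mu_1<\mu_2,\\ kL-\sqrt{k^2L^2-kL^2-h_{min}^2},& \mu_2<\mu_1<\mu_2/\nu.\end{cases}$$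
   Context: This is the reduced UAV placement problem for a decode-and-forward full-duplex relay (source at $(0,0,0)$, destination at $(L,0,0)$, UAV at $(x,0,h_{min})$); in the paper $\mu_1=\frac{p_S}{\rho p_R+\sigma^2}$ and $\mu_2=\frac{Np_R}{\sigma^2}$, but only $\mu_1,\mu_2>0$ is needed. *)

theory Defs
  imports Complex_Main
begin

definition g_tilde :: "real \<Rightarrow> real \<Rightarrow> real" where
  "g_tilde h x = x\<^sup>2 + h\<^sup>2"

definition f_tilde :: "real \<Rightarrow> real \<Rightarrow> real \<Rightarrow> real" where
  "f_tilde L h x = (x\<^sup>2 + h\<^sup>2) * ((x - L)\<^sup>2 + h\<^sup>2)"

definition uav_obj :: "real \<Rightarrow> real \<Rightarrow> real \<Rightarrow> real \<Rightarrow> real \<Rightarrow> real" where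
  "uav_obj L h mu1 mu2 x = min (mu1 / g_tilde h x) (mu2 * g_tilde h x / f_tilde L h x)"

definition is_maximizer :: "real \<Rightarrow> real \<Rightarrow> real \<Rightarrow> real \<Rightarrow> real \<Rightarrow> bool" where
  "is_maximizer L h mu1 mu2 x \<longleftrightarrow>
     x \<in> {0..L} \<and> (\<forall>y\<in>{0..L}. uav_obj L h mu1 mu2 y \<le> uav_obj L h mu1 mu2 x)"

end

theory Submission
  imports Defs
begin

text \<open>The first term of the objective is the source--UAV rate, strictly decreasing on \<open>[0, L]\<close>,
  and the second (after cancelling \<open>g_tilde\<close>) is the UAV--destination rate, strictly increasing.
  The minimum of a decreasing and an increasing function is maximized uniquely at the crossing
  point if the two graphs cross inside the interval, and otherwise at the endpoint where the
  smaller function is largest.\<close>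

lemma min_strict_antimono_strict_mono_less:
  fixes F G :: "'a::linorder \<Rightarrow> 'b::linorder"
  assumes "strict_antimono_on {a..b} F" and "strict_mono_on {a..b} G"
    and "c \<in> {a..b}"
    and "a < c \<Longrightarrow> G c \<le> F c" and "c < b \<Longrightarrow> F c \<le> G c"
    and "y \<in> {a..b}" and "y \<noteq> c"
  shows "min (F y) (G y) < min (F c) (G c)"
proof (cases "y < c")
  case True
  have "G c \<le> F c" using True assms(6) by (intro assms(4)) (auto intro: le_less_trans)
  have "min (F y) (G y) \<le> G y" by simp
  also have "G y < G c" using True assms(2,3,6) by (auto dest: strict_mono_onD)
  also have "G c = min (F c) (G c)" using \<open>G c \<le> F c\<close> by (simp add: min.absorb2)
  finally show ?thesis .
next
  case False
  then have "c < y" using assms(7) by simp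
  have "F c \<le> G c" using \<open>c < y\<close> assms(6) by (intro assms(5)) (auto intro: less_le_trans)
  have "min (F y) (G y) \<le> F y" by simp
  also have "F y < F c" using \<open>c < y\<close> assms(1,3,6) by (auto dest: monotone_onD)
  also have "F c = min (F c) (G c)" using \<open>F c \<le> G c\<close> by (simp add: min.absorb1)
  finally show ?thesis .
qed

lemma uav_obj_eq:
  assumes "h > 0"
  shows "uav_obj L h mu1 mu2 x = min (mu1 / (x\<^sup>2 + h\<^sup>2)) (mu2 / ((x - L)\<^sup>2 + h\<^sup>2))"
proof -
  have "x\<^sup>2 + h\<^sup>2 \<noteq> 0" using assms by (simp add: add_nonneg_pos)
  then show ?thesis unfolding uav_obj_def g_tilde_def f_tilde_def by simp
qed

lemma strict_antimono_on_source_rate: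
  fixes h mu1 :: real
  assumes "h > 0" and "mu1 > 0"
  shows "strict_antimono_on {0..} (\<lambda>x. mu1 / (x\<^sup>2 + h\<^sup>2))"
proof (rule monotone_onI)
  fix y z :: real assume "y \<in> {0..}" "z \<in> {0..}" "y < z"
  then have "y\<^sup>2 < z\<^sup>2" by (simp add: power_strict_mono)
  moreover have "y\<^sup>2 + h\<^sup>2 > 0" using assms by (simp add: add_nonneg_pos)
  ultimately show "mu1 / (z\<^sup>2 + h\<^sup>2) < mu1 / (y\<^sup>2 + h\<^sup>2)"
    using assms by (intro divide_strict_left_mono) auto
qed

lemma strict_mono_on_destination_rate:
  fixes L h mu2 :: real
  assumes "h > 0" and "mu2 > 0"
  shows "strict_mono_on {..L} (\<lambda>x. mu2 / ((x - L)\<^sup>2 + h\<^sup>2))"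
proof (rule monotone_onI)
  fix y z :: real assume "y \<in> {..L}" "z \<in> {..L}" "y < z"
  then have "(L - z)\<^sup>2 < (L - y)\<^sup>2" by (simp add: power_strict_mono)
  then have "(z - L)\<^sup>2 < (y - L)\<^sup>2" by (simp add: power2_commute)
  moreover have "(z - L)\<^sup>2 + h\<^sup>2 > 0" using assms by (simp add: add_nonneg_pos)
  ultimately show "mu2 / ((y - L)\<^sup>2 + h\<^sup>2) < mu2 / ((z - L)\<^sup>2 + h\<^sup>2)"
    using assms by (intro divide_strict_left_mono) auto
qed

lemma is_maximizer_iff_eq:
  fixes L h mu1 mu2 c :: real
  assumes "h > 0" and "mu1 > 0" and "mu2 > 0" and "c \<in> {0..L}"
    and "0 < c \<Longrightarrow> mu2 * (c\<^sup>2 + h\<^sup>2) \<le> mu1 * ((c - L)\<^sup>2 + h\<^sup>2)"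
    and "c < L \<Longrightarrow> mu1 * ((c - L)\<^sup>2 + h\<^sup>2) \<le> mu2 * (c\<^sup>2 + h\<^sup>2)"
  shows "\<forall>x. is_maximizer L h mu1 mu2 x \<longleftrightarrow> x = c"
proof -
  define F where "F x = mu1 / (x\<^sup>2 + h\<^sup>2)" for x
  define G where "G x = mu2 / ((x - L)\<^sup>2 + h\<^sup>2)" for x
  have pos: "c\<^sup>2 + h\<^sup>2 > 0" "(c - L)\<^sup>2 + h\<^sup>2 > 0" using assms(1) by (simp_all add: add_nonneg_pos)
  have "strict_antimono_on {0..L} F"
    using strict_antimono_on_source_rate[OF assms(1,2)] unfolding F_def
    by (rule monotone_on_subset) auto
  moreover have "strict_mono_on {0..L} G"
    using strict_mono_on_destination_rate[OF assms(1,3)] unfolding G_def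
    by (rule monotone_on_subset) auto
  moreover have "0 < c \<Longrightarrow> G c \<le> F c" and "c < L \<Longrightarrow> F c \<le> G c"
    using assms(5,6) pos unfolding F_def G_def by (simp_all add: divide_simps)
  ultimately have "min (F y) (G y) < min (F c) (G c)" if "y \<in> {0..L}" "y \<noteq> c" for y
    by (rule min_strict_antimono_strict_mono_less[OF _ _ assms(4) _ _ that])
  then have "uav_obj L h mu1 mu2 y < uav_obj L h mu1 mu2 c" if "y \<in> {0..L}" "y \<noteq> c" for y
    using that unfolding uav_obj_eq[OF assms(1)] F_def G_def by blast
  then show ?thesis
    using assms(4) unfolding is_maximizer_def by (metis less_eq_real_def not_less)
qed

lemma balance_point_exists:
  fixes L h mu1 mu2 :: real
  assumes "L \<ge> 0"
    and "mu2 * h\<^sup>2 < mu1 * (L\<^sup>2 + h\<^sup>2)" and "mu1 * h\<^sup>2 < mu2 * (L\<^sup>2 + h\<^sup>2)"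
  obtains c where "c \<in> {0..L}" and "mu1 * ((c - L)\<^sup>2 + h\<^sup>2) = mu2 * (c\<^sup>2 + h\<^sup>2)"
proof -
  have "\<exists>c\<ge>0. c \<le> L \<and> mu1 * ((c - L)\<^sup>2 + h\<^sup>2) - mu2 * (c\<^sup>2 + h\<^sup>2) = 0"
    by (rule IVT2') (use assms in \<open>auto intro!: continuous_intros\<close>)
  then show ?thesis using that by auto
qed

text \<open>The balance equation is the quadratic \<open>(c - k L)\<^sup>2 = k\<^sup>2 L\<^sup>2 - k L\<^sup>2 - h\<^sup>2\<close>; for
  \<open>mu1 < mu2\<close> we have \<open>k < 0\<close>, so \<open>c \<ge> k L\<close>, and for \<open>mu1 > mu2\<close> we have \<open>k > 1\<close>, so \<open>c \<le> k L\<close>.\<close>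

lemma balance_point_eq:
  fixes L h mu1 mu2 c :: real
  assumes "L > 0" and "mu1 > 0" and "mu2 > 0" and "c \<in> {0..L}"
    and balance: "mu1 * ((c - L)\<^sup>2 + h\<^sup>2) = mu2 * (c\<^sup>2 + h\<^sup>2)"
  defines "k \<equiv> mu1 / (mu1 - mu2)"
  shows "c = (if mu1 = mu2 then L / 2
              else if mu1 < mu2 then k * L + sqrt (k\<^sup>2 * L\<^sup>2 - k * L\<^sup>2 - h\<^sup>2)
              else k * L - sqrt (k\<^sup>2 * L\<^sup>2 - k * L\<^sup>2 - h\<^sup>2))"
proof (cases "mu1 = mu2")
  case True
  then show ?thesis using balance assms(1,2) by (simp add: power2_eq_square algebra_simps)
next
  case False
  then have k_mult: "k * (mu1 - mu2) = mu1" unfolding k_def by simp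
  have "(mu1 - mu2) * (c\<^sup>2 - 2 * k * L * c + k * L\<^sup>2 + h\<^sup>2)
      = (mu1 - mu2) * c\<^sup>2 - 2 * (k * (mu1 - mu2)) * L * c + (k * (mu1 - mu2)) * L\<^sup>2
        + (mu1 - mu2) * h\<^sup>2"
    by (simp add: algebra_simps)
  also have "\<dots> = mu1 * ((c - L)\<^sup>2 + h\<^sup>2) - mu2 * (c\<^sup>2 + h\<^sup>2)"
    unfolding k_mult by (simp add: power2_eq_square algebra_simps)
  finally have "(mu1 - mu2) * (c\<^sup>2 - 2 * k * L * c + k * L\<^sup>2 + h\<^sup>2) = 0"
    using balance by simp
  then have "c\<^sup>2 - 2 * k * L * c + k * L\<^sup>2 + h\<^sup>2 = 0" using False by simp
  then have "(c - k * L)\<^sup>2 = k\<^sup>2 * L\<^sup>2 - k * L\<^sup>2 - h\<^sup>2"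
    by (simp add: power2_eq_square algebra_simps)
  then have root: "sqrt (k\<^sup>2 * L\<^sup>2 - k * L\<^sup>2 - h\<^sup>2) = \<bar>c - k * L\<bar>"
    by (metis real_sqrt_abs)
  show ?thesis
  proof (cases "mu1 < mu2")
    case True
    then have "k < 0" unfolding k_def using assms(2) by (simp add: divide_pos_neg)
    then have "k * L \<le> c" using assms(1,4) mult_neg_pos[of k L] by simp
    then show ?thesis using root True by simp
  next
    case False
    then have "k > 1" unfolding k_def using \<open>mu1 \<noteq> mu2\<close> assms(3) by (simp add: field_simps)
    then have "L < k * L" using assms(1) mult_strict_right_mono[of 1 k L] by simp
    then have "c \<le> k * L" using assms(4) by simp
    then show ?thesis using root False \<open>mu1 \<noteq> mu2\<close> by simp
  qed
qed

theorem lemma3: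
  fixes L h mu1 mu2 :: real
  assumes "L > 0" and "h > 0" and "mu1 > 0" and "mu2 > 0"
  defines "\<nu> \<equiv> h\<^sup>2 / (L\<^sup>2 + h\<^sup>2)"
  defines "k \<equiv> mu1 / (mu1 - mu2)"
  defines "xstar \<equiv>
    (if mu1 \<le> \<nu> * mu2 then 0
     else if mu1 \<ge> mu2 / \<nu> then L
     else if mu1 = mu2 then L / 2
     else if \<nu> * mu2 < mu1 \<and> mu1 < mu2 then k * L + sqrt (k\<^sup>2 * L\<^sup>2 - k * L\<^sup>2 - h\<^sup>2)
     else k * L - sqrt (k\<^sup>2 * L\<^sup>2 - k * L\<^sup>2 - h\<^sup>2))"
  shows "\<forall>x. is_maximizer L h mu1 mu2 x \<longleftrightarrow> x = xstar"
proof -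
  have pos: "h\<^sup>2 > 0" "L\<^sup>2 + h\<^sup>2 > 0" using assms(1,2) by (simp_all add: add_nonneg_pos)
  have at_0: "mu1 \<le> \<nu> * mu2 \<longleftrightarrow> mu1 * (L\<^sup>2 + h\<^sup>2) \<le> mu2 * h\<^sup>2"
    and at_L: "mu1 \<ge> mu2 / \<nu> \<longleftrightarrow> mu2 * (L\<^sup>2 + h\<^sup>2) \<le> mu1 * h\<^sup>2"
    unfolding \<nu>_def using pos by (simp_all add: field_simps)
  consider "mu1 \<le> \<nu> * mu2" | "\<not> mu1 \<le> \<nu> * mu2" "mu1 \<ge> mu2 / \<nu>"
    | "\<not> mu1 \<le> \<nu> * mu2" "\<not> mu1 \<ge> mu2 / \<nu>" by blast
  then show ?thesis
  proof cases
    case 1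
    then show ?thesis unfolding xstar_def using assms(1-4) at_0
      by (intro is_maximizer_iff_eq) auto
  next
    case 2
    then show ?thesis unfolding xstar_def using assms(1-4) at_L
      by (intro is_maximizer_iff_eq) auto
  next
    case 3
    then obtain c where c: "c \<in> {0..L}" and balance: "mu1 * ((c - L)\<^sup>2 + h\<^sup>2) = mu2 * (c\<^sup>2 + h\<^sup>2)"
      using balance_point_exists[of L mu2 h mu1] assms(1) at_0 at_L by auto
    have "xstar = c"
      using balance_point_eq[OF assms(1,3,4) c balance] 3 unfolding xstar_def k_def by auto
    then show ?thesis using is_maximizer_iff_eq[OF assms(2-4) c] balance by simp
  qed
qed

end
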